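(* Assume $\kappa^\infty_{2i}\ge0$ for all $i\ge1$ and $\tilde\alpha>\tilde\alpha_{\rm s}$. Then there exist $a_\Omega,a_\Sigma>0$ such that, with $I^*_\Omega=[-a_\Omega,a_\Omega]$ and $I^*_\Sigma=[-a_\Sigma,a_\Sigma]$, for every $(\boldsymbol x,\boldsymbol y)\in\mathcal X_{I^*_\Sigma}\times\mathcal X_{I^*_\Omega}$ we have $(h^\Omega(\boldsymbol x,\boldsymbol y),h^\Sigma(\boldsymbol x,\boldsymbol y))\in\mathcal X_{I^*_\Omega}\times\mathcal X_{I^*_\Sigma}$.
   Context: $\gamma\in(0,1]$, $\alpha>0$, $\tilde\alpha=\alpha/\sqrt\gamma$. $\Lambda\ge0$ compactly supported with support supremum $b$; $\phi(z)=\mathbb E\{z/(z^2-\Lambda^2)\}$, $\bar\phi(z)=\gamma\phi(z)+(1-\gamma)/z$, $D=\phi\bar\phi$, $\tilde\alpha_{\rm s}=1/\sqrt{D(b^+)}$, $\Delta_{\rm PCA}=\frac{-2\phi(D^{-1}(1/\tilde\alpha^2))}{\tilde\alpha^2D'(D^{-1}(1/\tilde\alpha^2))}$; $\kappa^\infty_{2k}$ are the rectangular free cumulants of $\Lambda$ with ratio $\gamma$. For $\xi\in(0,1)$, arrays $\boldsymbol x=(x_{s,t})_{s,t\le0}$ indexed by non-positive integers carry the norm $\|\boldsymbol x\|_\xi=\sup_{s,t\le0}\xi^{\max(|s|,|t|)}|x_{s,t}|$, and $\mathcal X_I=\{\boldsymbol x:x_{s,t}\in I\ \forall s,t\}$.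 The limit maps are $$h^\Omega_{s,t}(\boldsymbol x,\boldsymbol y)=\gamma\sum_{j,k\ge0}\Big(\frac\gamma{\alpha^2}\Big)^{j+k}\Big(\kappa^\infty_{2(j+k+1)}\frac1{\alpha^2}(\alpha^2\Delta_{\rm PCA}+x_{s-j,t-k})+\kappa^\infty_{2(j+k+2)}\Big(\frac\gamma{\alpha^2}\Big)^2(\alpha^2\Delta_{\rm PCA}+y_{s-j,t-k})\Big),$$ $$h^\Sigma_{s,t}(\boldsymbol x,\boldsymbol y)=\sum_{j,k\ge0}\Big(\frac\gamma{\alpha^2}\Big)^{j+k}\Big(\kappa^\infty_{2(j+k+1)}\Big(\frac\gamma\alpha\Big)^2(\alpha^2\Delta_{\rm PCA}+y_{s-j,t-k})+\kappa^\infty_{2(j+k+2)}\Big(\frac\gamma{\alpha^2}\Big)^2(\alpha^2\Delta_{\rm PCA}+x_{s-j,t-k})\Big).$$ *)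

theory Defs
  imports "HOL-Probability.Probability" "HOL-Computational_Algebra.Formal_Power_Series"
begin

text \<open>The law of Lambda is a probability measure mu on the reals.\<close>

definition phi :: "real measure \<Rightarrow> real \<Rightarrow> real" where
  "phi mu z = (\<integral>x. z / (z^2 - x^2) \<partial>mu)"

definition phibar :: "real measure \<Rightarrow> real \<Rightarrow> real \<Rightarrow> real" where
  "phibar mu g z = g * phi mu z + (1 - g) / z"

definition Dfun :: "real measure \<Rightarrow> real \<Rightarrow> real \<Rightarrow> real" where
  "Dfun mu g z = phi mu z * phibar mu g z"

definition D_bplus :: "real measure \<Rightarrow> real \<Rightarrow> real \<Rightarrow> ereal" where
  "D_bplus mu g b = Lim (at_right b) (\<lambda>z. ereal (Dfun mu g z))"

text \<open>alpha_s = 1/sqrt(D(b+)), with the convention 1/sqrt(infinity) = 0.\<close>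
definition alpha_s :: "real measure \<Rightarrow> real \<Rightarrow> real \<Rightarrow> real" where
  "alpha_s mu g b = (case D_bplus mu g b of ereal d \<Rightarrow> 1 / sqrt d | _ \<Rightarrow> 0)"

definition Dinv :: "real measure \<Rightarrow> real \<Rightarrow> real \<Rightarrow> real \<Rightarrow> real" where
  "Dinv mu g b y = (THE z. b < z \<and> Dfun mu g z = y)"

definition Delta_PCA :: "real measure \<Rightarrow> real \<Rightarrow> real \<Rightarrow> real \<Rightarrow> real" where
  "Delta_PCA mu g b a =
     (let ta = a / sqrt g; z = Dinv mu g b (1 / ta^2)
      in - 2 * phi mu z / (ta^2 * deriv (Dfun mu g) z))"

text \<open>Rectangular free cumulants with ratio g (Benaych-Georges):
  with M(z) = sum_{n>=1} E[Lambda^(2n)] z^n and C(z) = sum_{n>=1} kappa_{2n} z^n,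
  C(z (g M(z) + 1)(M(z) + 1)) = M(z).  rect_cumulant mu g n is kappa_{2n}.\<close>
definition rect_moments :: "real measure \<Rightarrow> real fps" where
  "rect_moments mu = Abs_fps (\<lambda>n. if n = 0 then 0 else \<integral>x. x ^ (2 * n) \<partial>mu)"

definition rect_cumulant :: "real measure \<Rightarrow> real \<Rightarrow> nat \<Rightarrow> real" where
  "rect_cumulant mu g n =
     (let M = rect_moments mu; T = fps_X * (fps_const g * M + 1) * (M + 1)
      in fps_nth (M oo fps_inv T) n)"

text \<open>Arrays indexed by non-positive integers are functions int => int => real
  (only the values at s,t <= 0 matter).\<close>
definition inX :: "real set \<Rightarrow> (int \<Rightarrow> int \<Rightarrow> real) \<Rightarrow> bool" where
  "inX I x = (\<forall>s\<le>0. \<forall>t\<le>0. x s t \<in> I)"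

definition hOmega_term :: "real measure \<Rightarrow> real \<Rightarrow> real \<Rightarrow> real \<Rightarrow>
    (int \<Rightarrow> int \<Rightarrow> real) \<Rightarrow> (int \<Rightarrow> int \<Rightarrow> real) \<Rightarrow> int \<Rightarrow> int \<Rightarrow> nat \<times> nat \<Rightarrow> real" where
  "hOmega_term mu g a b x y s t jk = (case jk of (j, k) \<Rightarrow>
     (g / a^2) ^ (j + k) *
       (rect_cumulant mu g (j + k + 1) * (1 / a^2) *
          (a^2 * Delta_PCA mu g b a + x (s - int j) (t - int k))
        + rect_cumulant mu g (j + k + 2) * (g / a^2)^2 *
          (a^2 * Delta_PCA mu g b a + y (s - int j) (t - int k))))"

definition hSigma_term :: "real measure \<Rightarrow> real \<Rightarrow> real \<Rightarrow> real \<Rightarrow>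
    (int \<Rightarrow> int \<Rightarrow> real) \<Rightarrow> (int \<Rightarrow> int \<Rightarrow> real) \<Rightarrow> int \<Rightarrow> int \<Rightarrow> nat \<times> nat \<Rightarrow> real" where
  "hSigma_term mu g a b x y s t jk = (case jk of (j, k) \<Rightarrow>
     (g / a^2) ^ (j + k) *
       (rect_cumulant mu g (j + k + 1) * (g / a)^2 *
          (a^2 * Delta_PCA mu g b a + y (s - int j) (t - int k))
        + rect_cumulant mu g (j + k + 2) * (g / a^2)^2 *
          (a^2 * Delta_PCA mu g b a + x (s - int j) (t - int k))))"

definition hOmega :: "real measure \<Rightarrow> real \<Rightarrow> real \<Rightarrow> real \<Rightarrow>
    (int \<Rightarrow> int \<Rightarrow> real) \<Rightarrow> (int \<Rightarrow> int \<Rightarrow> real) \<Rightarrow> int \<Rightarrow> int \<Rightarrow> real" where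
  "hOmega mu g a b x y s t = g * (\<Sum>\<^sub>\<infinity>jk\<in>UNIV. hOmega_term mu g a b x y s t jk)"

definition hSigma :: "real measure \<Rightarrow> real \<Rightarrow> real \<Rightarrow> real \<Rightarrow>
    (int \<Rightarrow> int \<Rightarrow> real) \<Rightarrow> (int \<Rightarrow> int \<Rightarrow> real) \<Rightarrow> int \<Rightarrow> int \<Rightarrow> real" where
  "hSigma mu g a b x y s t = (\<Sum>\<^sub>\<infinity>jk\<in>UNIV. hSigma_term mu g a b x y s t jk)"

end

theory Submission
  imports Defs
begin

text \<open>
Put \<open>w = g / a\<^sup>2\<close> and \<open>\<kappa> = rect_cumulant mu g\<close>. The \<open>(j, k)\<close> terms of
\<open>hOmega\<close> and \<open>hSigma\<close> depend on \<open>(j, k)\<close> only through \<open>j + k\<close>, so for arrays in a box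
of half-widths \<open>(aS, aO)\<close> both maps are controlled by \<open>U = \<Sum>n. (n+1) \<kappa>(n+1) w^(n+1)\<close>
and \<open>A = \<Sum>n. (n+1) \<kappa>(n+2) w^(n+2)\<close>, i.e. by \<open>w C'(w)\<close> and \<open>w C'(w) - C(w)\<close> for the
cumulant series \<open>C\<close>. Suitable half-widths for which the box is mapped into itself exist as
soon as the nonnegative matrix \<open>[[g A, U], [g U, A]]\<close> has spectral radius below 1, i.e.
\<open>1 - A > 0\<close>, \<open>1 - g A > 0\<close> and \<open>(1 - g A)(1 - A) > g U\<^sup>2\<close>.

Since \<open>a / sqrt g > alpha_s\<close>, \<open>w \<le> T(z) = z (1 + g M(z)) (1 + M(z))\<close> for some \<open>z\<close> inside the
disc of convergence of the even moment series \<open>M\<close>. Evaluating \<open>C \<circ> T = M\<close> and its derivative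
at \<open>z\<close> expresses \<open>C\<close> and \<open>C'\<close> at \<open>T(z)\<close> through \<open>M(z)\<close> and \<open>M'(z)\<close>, which turns the three
conditions at \<open>T(z)\<close> into manifestly positive expressions; as all coefficients are
nonnegative, the series at \<open>w\<close> are dominated by those at \<open>T(z)\<close>.
\<close>

no_notation vec_nth (infixl \<open>$\<close> 90)
notation fps_nth (infixl \<open>$\<close> 75)

section \<open>Nonnegative formal power series evaluated in the extended nonnegative reals\<close>

definition fps_nonneg :: "real fps \<Rightarrow> bool" where
  "fps_nonneg f \<longleftrightarrow> (\<forall>n. 0 \<le> f $ n)"

text \<open>Evaluating in \<open>ennreal\<close> makes every series converge, so products and compositions
  commute with evaluation without any radius-of-convergence bookkeeping.\<close>

definition fps_ennval :: "real fps \<Rightarrow> ennreal \<Rightarrow> ennreal" where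
  "fps_ennval f x = (\<Sum>n. ennreal (f $ n) * x ^ n)"

lemma fps_nonneg_add: "fps_nonneg f \<Longrightarrow> fps_nonneg g \<Longrightarrow> fps_nonneg (f + g)"
  unfolding fps_nonneg_def by auto

lemma fps_nonneg_mult: "fps_nonneg f \<Longrightarrow> fps_nonneg g \<Longrightarrow> fps_nonneg (f * g)"
  unfolding fps_nonneg_def by (auto simp: fps_mult_nth intro!: sum_nonneg)

lemma fps_nonneg_power: "fps_nonneg f \<Longrightarrow> fps_nonneg (f ^ n)"
  by (induction n) (auto simp: fps_nonneg_mult, simp add: fps_nonneg_def)

lemma fps_nonneg_compose: "fps_nonneg f \<Longrightarrow> fps_nonneg h \<Longrightarrow> fps_nonneg (f oo h)"
  using fps_nonneg_power[of h] unfolding fps_nonneg_def fps_compose_nth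
  by (auto intro!: sum_nonneg)

lemma fps_nonneg_deriv: "fps_nonneg f \<Longrightarrow> fps_nonneg (fps_deriv f)"
  unfolding fps_nonneg_def by simp

lemma fps_nonneg_X: "fps_nonneg fps_X"
  and fps_nonneg_one: "fps_nonneg 1"
  and fps_nonneg_const: "0 \<le> c \<Longrightarrow> fps_nonneg (fps_const c)"
  unfolding fps_nonneg_def by simp_all

lemmas fps_nonneg_intros =
  fps_nonneg_add fps_nonneg_mult fps_nonneg_X fps_nonneg_one fps_nonneg_const

lemma suminf_ennreal_swap:
  fixes f :: "nat \<Rightarrow> nat \<Rightarrow> ennreal"
  shows "(\<Sum>n. \<Sum>i. f i n) = (\<Sum>i. \<Sum>n. f i n)"
proof -
  have "(\<Sum>n. \<Sum>i. f i n) = (\<integral>\<^sup>+n. (\<Sum>i. f i n) \<partial>count_space UNIV)"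
    by (simp add: nn_integral_count_space_nat)
  also have "\<dots> = (\<Sum>i. \<integral>\<^sup>+n. f i n \<partial>count_space UNIV)"
    by (rule nn_integral_suminf) simp
  also have "\<dots> = (\<Sum>i. \<Sum>n. f i n)"
    by (simp add: nn_integral_count_space_nat)
  finally show ?thesis .
qed

lemma suminf_ennreal_shift:
  fixes c :: "nat \<Rightarrow> ennreal"
  shows "(\<Sum>n. if i \<le> n then c (n - i) else 0) = (\<Sum>k. c k)"
proof -
  have "(\<Sum>n. if i \<le> n then c (n - i) else 0) =
      (\<Sum>j. (\<lambda>n. if i \<le> n then c (n - i) else 0) (j + i))
      + (\<Sum>j<i. (\<lambda>n. if i \<le> n then c (n - i) else 0) j)"
    by (rule suminf_offset) (rule summableI)
  then show ?thesis by simp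
qed

lemma fps_ennval_add:
  "fps_nonneg f \<Longrightarrow> fps_nonneg g \<Longrightarrow> fps_ennval (f + g) x = fps_ennval f x + fps_ennval g x"
  unfolding fps_ennval_def fps_nonneg_def
  by (subst suminf_add[OF summableI summableI]) (simp add: distrib_right)

lemma ennreal_nth_mult:
  assumes f: "fps_nonneg f" and g: "fps_nonneg g"
  shows "ennreal ((f * g) $ n) = (\<Sum>i=0..n. ennreal (f $ i) * ennreal (g $ (n - i)))"
proof -
  have "ennreal ((f * g) $ n) = (\<Sum>i=0..n. ennreal (f $ i * g $ (n - i)))"
    using f g by (subst sum_ennreal) (auto simp: fps_nonneg_def fps_mult_nth)
  also have "\<dots> = (\<Sum>i=0..n. ennreal (f $ i) * ennreal (g $ (n - i)))"
    using f g by (intro sum.cong) (auto simp: fps_nonneg_def ennreal_mult)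
  finally show ?thesis .
qed

lemma fps_ennval_mult:
  assumes f: "fps_nonneg f" and g: "fps_nonneg g"
  shows "fps_ennval (f * g) x = fps_ennval f x * fps_ennval g x"
proof -
  define t where "t n i = (if i \<le> n
      then ennreal (f $ i) * x ^ i * (ennreal (g $ (n - i)) * x ^ (n - i)) else 0)" for n i
  have "ennreal ((f * g) $ n) * x ^ n = (\<Sum>i=0..n. t n i)" for n
  proof -
    have "x ^ n = x ^ i * x ^ (n - i)" if "i \<le> n" for i
      using that by (simp add: power_add[symmetric])
    then show ?thesis
      unfolding ennreal_nth_mult[OF f g] sum_distrib_right t_def
      by (intro sum.cong) (auto simp: mult_ac)
  qed
  also have "(\<Sum>i=0..n. t n i) = (\<Sum>i. t n i)" for n
    by (rule suminf_finite[symmetric]) (auto simp: t_def)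
  finally have "fps_ennval (f * g) x = (\<Sum>n. \<Sum>i. t n i)"
    unfolding fps_ennval_def by simp
  also have "\<dots> = (\<Sum>i. \<Sum>n. t n i)"
    by (rule suminf_ennreal_swap)
  also have "\<dots> = (\<Sum>i. ennreal (f $ i) * x ^ i *
      (\<Sum>n. if i \<le> n then ennreal (g $ (n - i)) * x ^ (n - i) else 0))"
    unfolding t_def by (subst ennreal_suminf_cmult[symmetric]) (simp add: if_distrib cong: if_cong)
  also have "\<dots> = (\<Sum>i. ennreal (f $ i) * x ^ i * fps_ennval g x)"
    unfolding fps_ennval_def by (subst suminf_ennreal_shift) simp
  also have "\<dots> = fps_ennval f x * fps_ennval g x"
    unfolding fps_ennval_def by simp
  finally show ?thesis .
qed

lemma fps_ennval_single:
  assumes "\<And>n. n \<noteq> k \<Longrightarrow> f $ n = 0"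
  shows "fps_ennval f x = ennreal (f $ k) * x ^ k"
  unfolding fps_ennval_def using assms by (subst suminf_finite[of "{k}"]) auto

lemma fps_ennval_one [simp]: "fps_ennval 1 x = 1"
  using fps_ennval_single[where f=1 and k=0] by simp

lemma fps_ennval_X [simp]: "fps_ennval fps_X x = x"
  using fps_ennval_single[where f=fps_X and k=1] by simp

lemma fps_ennval_const [simp]: "0 \<le> c \<Longrightarrow> fps_ennval (fps_const c) x = ennreal c"
  using fps_ennval_single[where f="fps_const c" and k=0] by simp

lemma fps_ennval_power: "fps_nonneg f \<Longrightarrow> fps_ennval (f ^ n) x = fps_ennval f x ^ n"
  by (induction n) (simp_all add: fps_ennval_mult fps_nonneg_power)

lemma fps_ennval_compose:
  assumes f: "fps_nonneg f" and h: "fps_nonneg h" and h0: "h $ 0 = 0"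
  shows "fps_ennval (f oo h) x = fps_ennval f (fps_ennval h x)"
proof -
  have high: "(h ^ i) $ n = 0" if "n < i" for i n
    using that startsby_zero_power_prefix[OF h0] by blast
  have hi: "0 \<le> (h ^ i) $ n" for i n
    using fps_nonneg_power[OF h] unfolding fps_nonneg_def by blast
  have "ennreal ((f oo h) $ n) * x ^ n = (\<Sum>i. ennreal (f $ i) * (ennreal ((h ^ i) $ n) * x ^ n))"
    for n
  proof -
    have "ennreal ((f oo h) $ n) = (\<Sum>i=0..n. ennreal (f $ i * (h ^ i) $ n))"
      using f hi by (subst sum_ennreal) (auto simp: fps_nonneg_def fps_compose_nth)
    also have "\<dots> = (\<Sum>i=0..n. ennreal (f $ i) * ennreal ((h ^ i) $ n))"
      using f hi by (intro sum.cong) (auto simp: fps_nonneg_def ennreal_mult)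
    finally have "ennreal ((f oo h) $ n) * x ^ n
        = (\<Sum>i=0..n. ennreal (f $ i) * (ennreal ((h ^ i) $ n) * x ^ n))"
      by (simp add: sum_distrib_right mult.assoc)
    also have "\<dots> = (\<Sum>i. ennreal (f $ i) * (ennreal ((h ^ i) $ n) * x ^ n))"
      by (rule suminf_finite[symmetric]) (auto simp: high)
    finally show ?thesis .
  qed
  then have "fps_ennval (f oo h) x = (\<Sum>n. \<Sum>i. ennreal (f $ i) * (ennreal ((h ^ i) $ n) * x ^ n))"
    unfolding fps_ennval_def by simp
  also have "\<dots> = (\<Sum>i. \<Sum>n. ennreal (f $ i) * (ennreal ((h ^ i) $ n) * x ^ n))"
    by (rule suminf_ennreal_swap)
  also have "\<dots> = (\<Sum>i. ennreal (f $ i) * fps_ennval (h ^ i) x)"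
    by (simp add: fps_ennval_def)
  also have "\<dots> = (\<Sum>i. ennreal (f $ i) * fps_ennval h x ^ i)"
    by (simp add: fps_ennval_power[OF h])
  also have "\<dots> = fps_ennval f (fps_ennval h x)"
    by (simp add: fps_ennval_def[of f])
  finally show ?thesis .
qed

lemma fps_ennval_sums:
  assumes "fps_nonneg f" "0 \<le> w" "fps_ennval f (ennreal w) = ennreal r" "0 \<le> r"
  shows "(\<lambda>n. f $ n * w ^ n) sums r"
proof -
  have "(\<lambda>n. ennreal (f $ n) * ennreal w ^ n) sums fps_ennval f (ennreal w)"
    unfolding fps_ennval_def by (rule summable_sums[OF summableI])
  then have "(\<lambda>n. ennreal (f $ n * w ^ n)) sums ennreal r"
    using assms unfolding fps_nonneg_def by (simp add: ennreal_mult ennreal_power)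
  then show ?thesis
    using assms unfolding fps_nonneg_def by (subst (asm) sums_ennreal) auto
qed

section \<open>Double series depending only on the antidiagonal\<close>

lemma sum_antidiagonals_less:
  fixes h :: "nat \<Rightarrow> real"
  shows "(\<Sum>p\<in>{p::nat \<times> nat. fst p + snd p < N}. h (fst p + snd p)) = (\<Sum>n<N. real (Suc n) * h n)"
proof (induction N)
  case 0
  then show ?case by simp
next
  case (Suc N)
  have fin: "finite {p::nat \<times> nat. fst p + snd p < N}"
    by (rule finite_subset[of _ "{..<N} \<times> {..<N}"]) auto
  have split: "{p::nat \<times> nat. fst p + snd p < Suc N}
      = {p. fst p + snd p < N} \<union> (\<lambda>i. (i, N - i)) ` {..N}"
    by (auto simp: image_iff less_Suc_eq)
  have disj: "{p::nat \<times> nat. fst p + snd p < N} \<inter> (\<lambda>i. (i, N - i)) ` {..N} = {}"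
    by auto
  have inj: "inj_on (\<lambda>i. (i, N - i)) {..N}"
    by (auto simp: inj_on_def)
  have "(\<Sum>p\<in>(\<lambda>i. (i, N - i)) ` {..N}. h (fst p + snd p)) = real (Suc N) * h N"
    by (subst sum.reindex[OF inj]) simp
  then show ?case
    unfolding split by (subst sum.union_disjoint[OF fin _ disj]) (simp_all add: Suc.IH)
qed

lemma sum_antidiagonals_le_suminf:
  fixes h :: "nat \<Rightarrow> real"
  assumes "\<And>n. 0 \<le> h n" and "summable (\<lambda>n. real (Suc n) * h n)" and "finite F"
  shows "(\<Sum>p\<in>F. h (fst p + snd p)) \<le> (\<Sum>n. real (Suc n) * h n)"
proof -
  define N where "N = Suc (Max ((\<lambda>p. fst p + snd p) ` F))"
  have sub: "F \<subseteq> {p. fst p + snd p < N}"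
    using \<open>finite F\<close> by (auto simp: N_def less_Suc_eq_le intro: Max_ge)
  have fin: "finite {p::nat \<times> nat. fst p + snd p < N}"
    by (rule finite_subset[of _ "{..<N} \<times> {..<N}"]) auto
  have "(\<Sum>p\<in>F. h (fst p + snd p)) \<le> (\<Sum>p\<in>{p. fst p + snd p < N}. h (fst p + snd p))"
    using assms(1) by (intro sum_mono2[OF fin sub])
  also have "\<dots> = (\<Sum>n<N. real (Suc n) * h n)"
    by (rule sum_antidiagonals_less)
  also have "\<dots> \<le> (\<Sum>n. real (Suc n) * h n)"
    using assms(1) by (intro sum_le_suminf[OF assms(2)]) auto
  finally show ?thesis .
qed

lemma antidiagonal_summable_bound:
  fixes f :: "nat \<times> nat \<Rightarrow> real" and h :: "nat \<Rightarrow> real"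
  assumes f: "\<And>j k. \<bar>f (j, k)\<bar> \<le> h (j + k)"
    and h: "summable (\<lambda>n. real (Suc n) * h n)"
  shows "f summable_on UNIV" and "\<bar>infsum f UNIV\<bar> \<le> (\<Sum>n. real (Suc n) * h n)"
proof -
  define maj where "maj p = h (fst p + snd p)" for p
  have f_maj: "\<bar>f p\<bar> \<le> maj p" for p
    using f[of "fst p" "snd p"] by (simp add: maj_def)
  have h_nonneg: "0 \<le> h n" for n
    using order_trans[OF abs_ge_zero f[of n 0]] by simp
  have maj_finite: "sum maj F \<le> (\<Sum>n. real (Suc n) * h n)" if "finite F" for F
    unfolding maj_def using h_nonneg h that by (rule sum_antidiagonals_le_suminf)
  have maj_summable: "maj summable_on UNIV"
    using h_nonneg maj_finite
    by (intro nonneg_bdd_above_summable_on bdd_aboveI) (auto simp: maj_def)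
  moreover have "norm (maj p) = maj p" for p
    using h_nonneg by (simp add: maj_def)
  ultimately have norm_maj: "(\<lambda>p. norm (maj p)) summable_on UNIV"
    by simp
  have norm_f: "(\<lambda>p. norm (f p)) summable_on UNIV"
    using f_maj h_nonneg
    by (intro Infinite_Sum.abs_summable_on_comparison_test[OF norm_maj]) (auto simp: maj_def)
  then show "f summable_on UNIV"
    by (rule abs_summable_summable)
  have "\<bar>infsum f UNIV\<bar> \<le> infsum (\<lambda>p. norm (f p)) UNIV"
    using norm_infsum_bound[OF norm_f] by simp
  also have "\<dots> \<le> infsum maj UNIV"
    using f_maj by (intro infsum_mono[OF norm_f maj_summable]) simp
  also have "\<dots> \<le> (\<Sum>n. real (Suc n) * h n)"
    using maj_finite by (intro infsum_le_finite_sums[OF maj_summable]) blast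
  finally show "\<bar>infsum f UNIV\<bar> \<le> (\<Sum>n. real (Suc n) * h n)" .
qed
section \<open>The even moment series of a law on \<open>[0, b]\<close>\<close>

locale bounded_nonneg_law = prob_space mu for mu :: "real measure" + fixes b :: real
  assumes sets_eq_borel: "sets mu = sets borel"
    and AE_in_interval: "AE x in mu. 0 \<le> x \<and> x \<le> b"
begin

definition moment :: "nat \<Rightarrow> real" where
  "moment n = (\<integral>x. x ^ (2 * n) \<partial>mu)"

definition Mval :: "real \<Rightarrow> real" where
  "Mval z = (\<Sum>n. rect_moments mu $ n * z ^ n)"

definition dMval :: "real \<Rightarrow> real" where
  "dMval z = (\<Sum>n. fps_deriv (rect_moments mu) $ n * z ^ n)"

lemma b_nonneg: "0 \<le> b"
proof -
  have "AE x in mu. 0 \<le> b"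
    using AE_in_interval by eventually_elim auto
  then show ?thesis by simp
qed

lemma borel_measurable_mu: "f \<in> borel_measurable borel \<Longrightarrow> f \<in> borel_measurable mu"
  by (subst measurable_cong_sets[OF sets_eq_borel refl])

lemma integrable_even_power: "integrable mu (\<lambda>x. x ^ (2 * n))"
proof (rule integrable_const_bound)
  show "AE x in mu. norm (x ^ (2 * n)) \<le> b ^ (2 * n)"
    using AE_in_interval by eventually_elim (auto simp: abs_le_iff power_mono)
  show "(\<lambda>x. x ^ (2 * n)) \<in> borel_measurable mu"
    by (rule borel_measurable_mu) measurable
qed

lemma moment_nonneg: "0 \<le> moment n"
  unfolding moment_def by (rule integral_nonneg_AE) (simp add: zero_le_even_power)

lemma moment_le: "moment n \<le> b ^ (2 * n)"
proof -
  have "AE x in mu. x ^ (2 * n) \<le> b ^ (2 * n)"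
    using AE_in_interval by eventually_elim (auto intro: power_mono)
  then have "moment n \<le> (\<integral>x. b ^ (2 * n) \<partial>mu)"
    unfolding moment_def using integrable_even_power[of n] by (intro integral_mono_AE) auto
  also have "\<dots> = b ^ (2 * n)"
    by (simp add: prob_space)
  finally show ?thesis .
qed

lemma moment_0: "moment 0 = 1"
  unfolding moment_def by (simp add: prob_space)

lemma rect_moments_nth: "rect_moments mu $ n = (if n = 0 then 0 else moment n)"
  unfolding rect_moments_def moment_def by simp

lemma fps_nonneg_rect_moments: "fps_nonneg (rect_moments mu)"
  unfolding fps_nonneg_def rect_moments_nth using moment_nonneg by simp

lemma moment_series_summable:
  assumes "0 \<le> z" "b\<^sup>2 * z < 1"
  shows "summable (\<lambda>n. moment n * z ^ n)"
proof (rule summable_comparison_test')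
  show "summable (\<lambda>n. (b\<^sup>2 * z) ^ n)"
    using assms b_nonneg by (intro summable_geometric) simp
  show "norm (moment n * z ^ n) \<le> (b\<^sup>2 * z) ^ n" for n
    using moment_le[of n] moment_nonneg[of n] assms
    by (simp add: power_mult power_mult_distrib mult_right_mono)
qed

lemma moment_series_sums:
  assumes z: "0 \<le> z" "b\<^sup>2 * z < 1"
  shows "(\<lambda>n. moment n * z ^ n) sums (\<integral>x. 1 / (1 - z * x\<^sup>2) \<partial>mu)"
proof -
  define f where "f n x = (z * x\<^sup>2) ^ n" for n x
  have f_eq: "f n = (\<lambda>x. z ^ n * x ^ (2 * n))" for n
    by (auto simp: f_def power_mult power_mult_distrib fun_eq_iff)
  have integral_f: "(\<integral>x. f n x \<partial>mu) = moment n * z ^ n" for n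
    by (simp add: f_eq moment_def)
  have f_sums: "AE x in mu. (\<lambda>n. f n x) sums (1 / (1 - z * x\<^sup>2))"
    using AE_in_interval
  proof eventually_elim
    case (elim x)
    have "z * x\<^sup>2 \<le> z * b\<^sup>2"
      using elim z by (intro mult_left_mono power_mono) auto
    then have "norm (z * x\<^sup>2) < 1"
      using z by (simp add: mult.commute)
    then show ?case
      unfolding f_def by (rule geometric_sums)
  qed
  have "(\<integral>x. 1 / (1 - z * x\<^sup>2) \<partial>mu) = (\<integral>x. (\<Sum>n. f n x) \<partial>mu)"
    using f_sums by (intro integral_cong_AE borel_measurable_mu) (auto simp: f_def sums_iff)
  also have "\<dots> = (\<Sum>n. \<integral>x. f n x \<partial>mu)"
  proof (rule integral_suminf)
    show "integrable mu (f n)" for n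
      unfolding f_eq by (intro integrable_mult_right integrable_even_power)
    show "AE x in mu. summable (\<lambda>n. norm (f n x))"
      using f_sums by eventually_elim (auto simp: f_def sums_iff zero_le_mult_iff z)
    show "summable (\<lambda>n. \<integral>x. norm (f n x) \<partial>mu)"
      using moment_series_summable[OF z] by (simp add: f_def z integral_f[unfolded f_def])
  qed
  finally show ?thesis
    unfolding integral_f using moment_series_summable[OF z] by (simp add: summable_sums)
qed

lemma Mval_summable:
  assumes "0 \<le> z" "b\<^sup>2 * z < 1"
  shows "summable (\<lambda>n. rect_moments mu $ n * z ^ n)"
  by (rule summable_comparison_test'[OF moment_series_summable[OF assms]])
    (use assms moment_nonneg in \<open>simp add: rect_moments_nth\<close>)

lemma Mval_nonneg: "0 \<le> z \<Longrightarrow> b\<^sup>2 * z < 1 \<Longrightarrow> 0 \<le> Mval z"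
  unfolding Mval_def
  by (intro suminf_nonneg Mval_summable) (simp_all add: rect_moments_nth moment_nonneg)

lemma one_plus_Mval:
  assumes "0 \<le> z" "b\<^sup>2 * z < 1"
  shows "1 + Mval z = (\<Sum>n. moment n * z ^ n)"
proof -
  have "(\<Sum>n. moment (Suc n) * z ^ Suc n) = (\<Sum>n. moment n * z ^ n) - moment 0 * z ^ 0"
    by (rule suminf_split_head[OF moment_series_summable[OF assms]])
  moreover have "(\<Sum>n. rect_moments mu $ Suc n * z ^ Suc n) = Mval z - rect_moments mu $ 0 * z ^ 0"
    unfolding Mval_def by (rule suminf_split_head[OF Mval_summable[OF assms]])
  ultimately show ?thesis
    by (simp add: rect_moments_nth moment_0)
qed

lemma Mval_mono:
  assumes "0 \<le> z" "z \<le> z'" "b\<^sup>2 * z' < 1"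
  shows "Mval z \<le> Mval z'"
proof -
  have "b\<^sup>2 * z \<le> b\<^sup>2 * z'"
    using assms by (simp add: mult_left_mono)
  then have "b\<^sup>2 * z < 1"
    using assms by linarith
  then show ?thesis
    unfolding Mval_def using assms
    by (intro suminf_le Mval_summable)
      (auto simp: rect_moments_nth moment_nonneg mult_left_mono power_mono)
qed

lemma fps_ennval_rect_moments:
  assumes "0 \<le> z" "b\<^sup>2 * z < 1"
  shows "fps_ennval (rect_moments mu) (ennreal z) = ennreal (Mval z)"
proof -
  have "fps_ennval (rect_moments mu) (ennreal z) = (\<Sum>n. ennreal (rect_moments mu $ n * z ^ n))"
    unfolding fps_ennval_def using assms
    by (simp add: rect_moments_nth moment_nonneg ennreal_mult ennreal_power)
  also have "\<dots> = ennreal (Mval z)"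
    unfolding Mval_def using assms
    by (intro suminf_ennreal2 Mval_summable) (simp_all add: rect_moments_nth moment_nonneg)
  finally show ?thesis .
qed

lemma dMval_summable:
  assumes "0 \<le> z" "b\<^sup>2 * z < 1"
  shows "summable (\<lambda>n. fps_deriv (rect_moments mu) $ n * z ^ n)"
proof -
  define K where "K = (if b = 0 then z + 1 else 1 / b\<^sup>2)"
  have K: "norm z < K"
    using assms b_nonneg by (auto simp: K_def field_simps)
  have "summable (\<lambda>n. diffs (\<lambda>n. (b\<^sup>2) ^ n) n * z ^ n)"
  proof (rule termdiff_converges[OF K])
    fix x :: real
    assume "norm x < K"
    then have "norm (b\<^sup>2 * x) < 1"
      using b_nonneg by (cases "b = 0") (auto simp: K_def field_simps abs_mult)
    then show "summable (\<lambda>n. (b\<^sup>2) ^ n * x ^ n)"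
      by (simp add: power_mult_distrib[symmetric] summable_geometric)
  qed
  then show ?thesis
  proof (rule summable_comparison_test')
    fix n :: nat
    have "rect_moments mu $ Suc n \<le> (b\<^sup>2) ^ Suc n"
      using moment_le[of "Suc n"] by (simp add: rect_moments_nth power_mult power2_eq_square mult.assoc)
    then show "norm (fps_deriv (rect_moments mu) $ n * z ^ n) \<le> diffs (\<lambda>n. (b\<^sup>2) ^ n) n * z ^ n"
      using assms moment_nonneg[of "Suc n"]
      by (simp add: diffs_def rect_moments_nth mult_right_mono del: power_Suc)
  qed
qed

lemma dMval_nonneg: "0 \<le> z \<Longrightarrow> b\<^sup>2 * z < 1 \<Longrightarrow> 0 \<le> dMval z"
  unfolding dMval_def
  by (intro suminf_nonneg dMval_summable) (simp_all add: rect_moments_nth moment_nonneg)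

lemma fps_ennval_deriv_rect_moments:
  assumes "0 \<le> z" "b\<^sup>2 * z < 1"
  shows "fps_ennval (fps_deriv (rect_moments mu)) (ennreal z) = ennreal (dMval z)"
proof -
  have nonneg: "0 \<le> fps_deriv (rect_moments mu) $ n" for n
    using fps_nonneg_deriv[OF fps_nonneg_rect_moments] unfolding fps_nonneg_def ..
  have "fps_ennval (fps_deriv (rect_moments mu)) (ennreal z)
      = (\<Sum>n. ennreal (fps_deriv (rect_moments mu) $ n * z ^ n))"
    unfolding fps_ennval_def using assms nonneg by (simp add: ennreal_mult ennreal_power)
  also have "\<dots> = ennreal (dMval z)"
    unfolding dMval_def using assms nonneg by (intro suminf_ennreal2 dMval_summable) simp_all
  finally show ?thesis .
qed

lemma inverse_square_in_disc:
  assumes "b < y"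
  shows "0 < 1 / y\<^sup>2" and "b\<^sup>2 * (1 / y\<^sup>2) < 1"
  using assms b_nonneg by (auto simp: field_simps power_strict_mono)

lemma phi_eq_Mval:
  assumes "b < y"
  shows "phi mu y = (1 + Mval (1 / y\<^sup>2)) / y"
proof -
  have "y \<noteq> 0"
    using assms b_nonneg by simp
  then have "y / (y\<^sup>2 - x\<^sup>2) = (1 / (1 - 1 / y\<^sup>2 * x\<^sup>2)) / y" for x
  proof (cases "x\<^sup>2 = y\<^sup>2")
    case False
    then have "1 - 1 / y\<^sup>2 * x\<^sup>2 = (y\<^sup>2 - x\<^sup>2) / y\<^sup>2"
      using \<open>y \<noteq> 0\<close> by (simp add: field_simps)
    then show ?thesis
      using False \<open>y \<noteq> 0\<close> by (simp add: power2_eq_square)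
  qed (use \<open>y \<noteq> 0\<close> in simp)
  then have "phi mu y = (\<integral>x. (1 / (1 - 1 / y\<^sup>2 * x\<^sup>2)) / y \<partial>mu)"
    unfolding phi_def by presburger
  also have "\<dots> = (\<integral>x. 1 / (1 - 1 / y\<^sup>2 * x\<^sup>2) \<partial>mu) / y"
    by (rule integral_divide_zero)
  also have "(\<integral>x. 1 / (1 - 1 / y\<^sup>2 * x\<^sup>2) \<partial>mu) = 1 + Mval (1 / y\<^sup>2)"
  proof -
    note z = less_imp_le[OF inverse_square_in_disc(1)[OF assms]] inverse_square_in_disc(2)[OF assms]
    show ?thesis
      unfolding one_plus_Mval[OF z] by (rule sums_unique[OF moment_series_sums[OF z]])
  qed
  finally show ?thesis .
qed

lemma Dfun_eq_Mval:
  assumes "b < y"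
  shows "Dfun mu g y = 1 / y\<^sup>2 * (1 + g * Mval (1 / y\<^sup>2)) * (1 + Mval (1 / y\<^sup>2))"
  using assms b_nonneg
  by (simp add: Dfun_def phibar_def phi_eq_Mval[OF assms] field_simps power2_eq_square)

lemma Dfun_antimono:
  assumes g: "0 \<le> g" and y: "b < y" "y \<le> y'"
  shows "Dfun mu g y' \<le> Dfun mu g y"
proof -
  have y': "b < y'"
    using y by simp
  have z: "1 / y'\<^sup>2 \<le> 1 / y\<^sup>2"
    using y b_nonneg by (intro divide_left_mono power_mono) auto
  have M: "Mval (1 / y'\<^sup>2) \<le> Mval (1 / y\<^sup>2)" "0 \<le> Mval (1 / y'\<^sup>2)"
    using inverse_square_in_disc[OF y(1)] inverse_square_in_disc[OF y'] z
    by (auto intro: Mval_mono Mval_nonneg)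
  show ?thesis
    unfolding Dfun_eq_Mval[OF y(1)] Dfun_eq_Mval[OF y']
    using z M g by (intro mult_mono) (auto intro: mult_left_mono)
qed

lemma Dfun_pos:
  assumes "0 \<le> g" "b < y"
  shows "0 < Dfun mu g y"
proof -
  have "0 \<le> Mval (1 / y\<^sup>2)"
    using inverse_square_in_disc[OF assms(2)] by (intro Mval_nonneg) auto
  then show ?thesis
    unfolding Dfun_eq_Mval[OF assms(2)] using inverse_square_in_disc(1)[OF assms(2)] assms(1)
    by (intro mult_pos_pos add_pos_nonneg) auto
qed

lemma D_bplus_eq_SUP:
  assumes "0 \<le> g"
  shows "D_bplus mu g b = (SUP y\<in>{b<..}. ereal (Dfun mu g y))"
proof -
  define L where "L = (SUP y\<in>{b<..}. ereal (Dfun mu g y))"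
  have "((\<lambda>y. ereal (Dfun mu g y)) \<longlongrightarrow> L) (at_right b)"
  proof (rule order_tendstoI)
    fix l
    assume "l < L"
    then obtain y0 where y0: "b < y0" "l < ereal (Dfun mu g y0)"
      unfolding L_def by (auto simp: less_SUP_iff)
    have "l < ereal (Dfun mu g y)" if "b < y" "y < y0" for y
      using y0 Dfun_antimono[OF assms that(1), of y0] that by (auto intro: less_le_trans)
    then show "eventually (\<lambda>y. l < ereal (Dfun mu g y)) (at_right b)"
      unfolding eventually_at_right_field using y0(1) by blast
  next
    fix u
    assume "L < u"
    have "ereal (Dfun mu g y) \<le> L" if "b < y" for y
      unfolding L_def using that by (intro SUP_upper) simp
    then have "ereal (Dfun mu g y) < u" if "b < y" for y
      using \<open>L < u\<close> that by (blast intro: le_less_trans)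
    then show "eventually (\<lambda>y. ereal (Dfun mu g y) < u) (at_right b)"
      using eventually_at_right_less[of b] by (auto elim: eventually_mono)
  qed
  then show ?thesis
    unfolding D_bplus_def L_def by (rule tendsto_Lim[rotated]) simp
qed

end

section \<open>Cumulant series evaluated at \<open>T(z)\<close>\<close>

definition Tval :: "real \<Rightarrow> real \<Rightarrow> real \<Rightarrow> real" where
  "Tval g m z = z * (1 + g * m) * (1 + m)"

definition dTval :: "real \<Rightarrow> real \<Rightarrow> real \<Rightarrow> real \<Rightarrow> real" where
  "dTval g m p z = (1 + g * m) * (1 + m) + z * (g * p * (1 + m) + (1 + g * m) * p)"

lemma dTval_ge_1:
  fixes g m p z :: real
  assumes "0 \<le> g" "0 \<le> m" "0 \<le> p" "0 \<le> z"
  shows "1 \<le> dTval g m p z"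
proof -
  have "1 \<le> (1 + g * m) * (1 + m)"
    using assms mult_mono[of 1 "1 + g * m" 1 "1 + m"] by simp
  moreover have "0 \<le> z * (g * p * (1 + m) + (1 + g * m) * p)"
    using assms by simp
  ultimately show ?thesis
    unfolding dTval_def by linarith
qed

text \<open>With \<open>U = T C'(T) = T M' / T'\<close> and \<open>A = U - M\<close> (here \<open>m = M(z)\<close>, \<open>p = M'(z)\<close>),
  the three conditions on \<open>U\<close>, \<open>A\<close> become quotients of products of positive factors.\<close>

lemma contraction_conditions:
  fixes g m p z :: real
  assumes "0 \<le> g" "0 \<le> m" "0 \<le> p" "0 \<le> z"
  defines "U \<equiv> Tval g m z * (p / dTval g m p z)"
  shows "0 \<le> U" and "0 < 1 - (U - m)" and "0 < 1 - g * (U - m)"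
    and "0 < (1 - g * (U - m)) * (1 - (U - m)) - g * U\<^sup>2"
proof -
  define S where "S = dTval g m p z"
  have S: "1 \<le> S"
    unfolding S_def using dTval_ge_1[OF assms(1-4)] .
  have e1: "1 - (U - m) = (1 + m)\<^sup>2 * ((1 + g * m) + g * z * p) / S"
    using S unfolding U_def S_def[symmetric]
    by (simp add: field_simps) (simp add: S_def dTval_def Tval_def algebra_simps power2_eq_square)
  have e2: "1 - g * (U - m) = (1 + g * m)\<^sup>2 * ((1 + m) + z * p) / S"
    using S unfolding U_def S_def[symmetric]
    by (simp add: field_simps) (simp add: S_def dTval_def Tval_def algebra_simps power2_eq_square)
  have "(1 - g * (U - m)) * (1 - (U - m)) - g * U\<^sup>2 =
      ((1 + g * m)\<^sup>2 * ((1 + m) + z * p)) * ((1 + m)\<^sup>2 * ((1 + g * m) + g * z * p)) / S\<^sup>2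
      - g * (z * (1 + g * m) * (1 + m) * p)\<^sup>2 / S\<^sup>2"
    unfolding e1 e2 unfolding U_def S_def[symmetric] Tval_def
    by (simp add: power_divide power2_eq_square)
  also have "\<dots> = (1 + m)\<^sup>2 * (1 + g * m)\<^sup>2 * S / S\<^sup>2"
    by (simp add: diff_divide_distrib[symmetric] S_def dTval_def power2_eq_square algebra_simps)
  also have "\<dots> = (1 + m)\<^sup>2 * (1 + g * m)\<^sup>2 / S"
    using S by (simp add: power2_eq_square)
  finally have e3: "(1 - g * (U - m)) * (1 - (U - m)) - g * U\<^sup>2 = (1 + m)\<^sup>2 * (1 + g * m)\<^sup>2 / S" .
  have products: "0 \<le> g * m" "0 \<le> g * z * p" "0 \<le> z * p"
    using assms by simp_all
  note pos = products assms S
  show "0 < 1 - (U - m)"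
    unfolding e1 using pos by (intro divide_pos_pos mult_pos_pos add_pos_nonneg zero_less_power) auto
  show "0 < 1 - g * (U - m)"
    unfolding e2 using pos by (intro divide_pos_pos mult_pos_pos add_pos_nonneg zero_less_power) auto
  show "0 < (1 - g * (U - m)) * (1 - (U - m)) - g * U\<^sup>2"
    unfolding e3 using pos by (intro divide_pos_pos mult_pos_pos add_pos_nonneg zero_less_power) auto
  show "0 \<le> U"
    unfolding U_def Tval_def using assms S by (simp add: S_def)
qed

context bounded_nonneg_law
begin

lemma exists_small_T_ge:
  assumes g: "0 < g" and a: "0 < a" and above: "a / sqrt g > alpha_s mu g b"
  shows "\<exists>z. 0 < z \<and> b\<^sup>2 * z < 1 \<and> g / a\<^sup>2 \<le> Tval g (Mval z) z"
proof (rule ccontr)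
  assume no_z: "\<not> ?thesis"
  have below: "Dfun mu g y \<le> g / a\<^sup>2" if "b < y" for y
  proof -
    have "\<not> g / a\<^sup>2 \<le> 1 / y\<^sup>2 * (1 + g * Mval (1 / y\<^sup>2)) * (1 + Mval (1 / y\<^sup>2))"
      using no_z inverse_square_in_disc[OF that] unfolding Tval_def by blast
    then show ?thesis
      unfolding Dfun_eq_Mval[OF that] by simp
  qed
  have "ereal (Dfun mu g (b + 1)) \<le> D_bplus mu g b"
    unfolding D_bplus_eq_SUP[OF less_imp_le[OF g]] by (rule SUP_upper) simp
  moreover have "D_bplus mu g b \<le> ereal (g / a\<^sup>2)"
    unfolding D_bplus_eq_SUP[OF less_imp_le[OF g]] using below by (intro SUP_least) simp
  ultimately obtain d where d: "D_bplus mu g b = ereal d" "0 < d" "d \<le> g / a\<^sup>2"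
    using Dfun_pos[of g "b + 1"] g by (cases "D_bplus mu g b") auto
  have "a / sqrt g = 1 / sqrt (g / a\<^sup>2)"
    using a g by (simp add: real_sqrt_divide)
  also have "\<dots> \<le> 1 / sqrt d"
    using d by (intro divide_left_mono real_sqrt_le_mono mult_pos_pos) auto
  also have "\<dots> = alpha_s mu g b"
    unfolding alpha_s_def d by simp
  finally show False
    using above by simp
qed

definition Tfps :: "real \<Rightarrow> real fps" where
  "Tfps g = fps_X * (fps_const g * rect_moments mu + 1) * (rect_moments mu + 1)"

definition Cfps :: "real \<Rightarrow> real fps" where
  "Cfps g = rect_moments mu oo fps_inv (Tfps g)"

lemma rect_cumulant_eq_Cfps: "rect_cumulant mu g n = Cfps g $ n"
  unfolding rect_cumulant_def Cfps_def Tfps_def by (simp add: Let_def)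

lemma Tfps_nth_0: "Tfps g $ 0 = 0"
  unfolding Tfps_def by (simp add: mult.assoc)

lemma Tfps_nth_1: "Tfps g $ 1 = 1"
  unfolding Tfps_def by (simp add: mult.assoc rect_moments_nth)

lemma Cfps_compose_Tfps: "Cfps g oo Tfps g = rect_moments mu"
proof -
  have "fps_inv (Tfps g) $ 0 = 0"
    by (simp add: fps_inv_def)
  then have "Cfps g oo Tfps g = rect_moments mu oo (fps_inv (Tfps g) oo Tfps g)"
    unfolding Cfps_def by (rule fps_compose_assoc[OF Tfps_nth_0, symmetric])
  also have "\<dots> = rect_moments mu"
    using fps_inv[of "Tfps g"] Tfps_nth_0 Tfps_nth_1 by simp
  finally show ?thesis .
qed

lemma fps_deriv_rect_moments_chain:
  "fps_deriv (rect_moments mu) = (fps_deriv (Cfps g) oo Tfps g) * fps_deriv (Tfps g)"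
  using fps_compose_deriv[OF Tfps_nth_0, of "Cfps g" g] by (simp add: Cfps_compose_Tfps)

lemma rect_cumulant_0: "rect_cumulant mu g 0 = 0"
  unfolding rect_cumulant_eq_Cfps Cfps_def by (simp add: rect_moments_nth)

lemma rect_cumulant_nonneg:
  assumes "\<forall>i\<ge>1. 0 \<le> rect_cumulant mu g i"
  shows "0 \<le> rect_cumulant mu g n"
  using assms rect_cumulant_0 by (cases n) auto

lemma fps_nonneg_Cfps:
  assumes "\<forall>i\<ge>1. 0 \<le> rect_cumulant mu g i"
  shows "fps_nonneg (Cfps g)"
  using rect_cumulant_nonneg[OF assms] unfolding fps_nonneg_def rect_cumulant_eq_Cfps by blast

lemma fps_nonneg_Tfps: "0 \<le> g \<Longrightarrow> fps_nonneg (Tfps g)"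
  unfolding Tfps_def by (intro fps_nonneg_intros fps_nonneg_rect_moments)

lemma fps_deriv_Tfps: "fps_deriv (Tfps g) = (fps_const g * rect_moments mu + 1) * (rect_moments mu + 1)
    + fps_X * ((fps_const g * fps_deriv (rect_moments mu)) * (rect_moments mu + 1)
      + (fps_const g * rect_moments mu + 1) * fps_deriv (rect_moments mu))"
  unfolding Tfps_def by (simp add: algebra_simps)

lemma fps_nonneg_deriv_Tfps: "0 \<le> g \<Longrightarrow> fps_nonneg (fps_deriv (Tfps g))"
  unfolding fps_deriv_Tfps
  by (intro fps_nonneg_intros fps_nonneg_rect_moments fps_nonneg_deriv)

context
  fixes g z :: real
  assumes g: "0 \<le> g" and z: "0 \<le> z" "b\<^sup>2 * z < 1"
begin

lemma fps_ennval_Tfps: "fps_ennval (Tfps g) (ennreal z) = ennreal (Tval g (Mval z) z)"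
proof -
  have "0 \<le> Mval z"
    using Mval_nonneg z by simp
  then show ?thesis
    unfolding Tfps_def Tval_def using g z
    by (simp add: fps_nonneg_intros fps_nonneg_rect_moments fps_ennval_add fps_ennval_mult
        fps_ennval_rect_moments ennreal_mult ennreal_plus add.commute)
qed

lemma fps_ennval_deriv_Tfps:
  "fps_ennval (fps_deriv (Tfps g)) (ennreal z) = ennreal (dTval g (Mval z) (dMval z) z)"
proof -
  have "0 \<le> Mval z" "0 \<le> dMval z"
    using Mval_nonneg dMval_nonneg z by simp_all
  then show ?thesis
    unfolding fps_deriv_Tfps dTval_def using g z
    by (simp add: fps_nonneg_intros fps_nonneg_rect_moments fps_nonneg_deriv fps_ennval_add
        fps_ennval_mult fps_ennval_rect_moments fps_ennval_deriv_rect_moments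
        ennreal_mult ennreal_plus add.commute)
qed

context
  assumes cumulants_nonneg: "\<forall>i\<ge>1. 0 \<le> rect_cumulant mu g i"
begin

lemma cumulant_series_sums:
  "(\<lambda>n. rect_cumulant mu g n * Tval g (Mval z) z ^ n) sums Mval z"
proof -
  have "fps_ennval (Cfps g) (ennreal (Tval g (Mval z) z)) = fps_ennval (Cfps g oo Tfps g) (ennreal z)"
    by (simp only: fps_ennval_Tfps
        fps_ennval_compose[OF fps_nonneg_Cfps[OF cumulants_nonneg] fps_nonneg_Tfps[OF g] Tfps_nth_0])
  also have "\<dots> = ennreal (Mval z)"
    by (simp only: Cfps_compose_Tfps fps_ennval_rect_moments[OF z])
  finally have "fps_ennval (Cfps g) (ennreal (Tval g (Mval z) z)) = ennreal (Mval z)" .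
  then show ?thesis
    unfolding rect_cumulant_eq_Cfps using Mval_nonneg[OF z] z g
    by (intro fps_ennval_sums fps_nonneg_Cfps cumulants_nonneg) (auto simp: Tval_def)
qed

lemma cumulant_deriv_series_sums:
  "(\<lambda>n. real (Suc n) * rect_cumulant mu g (Suc n) * Tval g (Mval z) z ^ n)
    sums (dMval z / dTval g (Mval z) (dMval z) z)"
proof -
  define S where "S = dTval g (Mval z) (dMval z) z"
  define w where "w = Tval g (Mval z) z"
  have nonneg: "0 \<le> Mval z" "0 \<le> dMval z"
    using Mval_nonneg dMval_nonneg z by simp_all
  have S: "1 \<le> S"
    unfolding S_def using dTval_ge_1 g z nonneg by simp
  have C': "fps_nonneg (fps_deriv (Cfps g))"
    by (intro fps_nonneg_deriv fps_nonneg_Cfps cumulants_nonneg)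
  have "ennreal (dMval z) = fps_ennval (fps_deriv (rect_moments mu)) (ennreal z)"
    using fps_ennval_deriv_rect_moments[OF z] by simp
  also have "\<dots> = fps_ennval (fps_deriv (Cfps g)) (ennreal w) * ennreal S"
    unfolding fps_deriv_rect_moments_chain[of g] w_def S_def
    by (simp add: fps_ennval_mult fps_nonneg_compose C' fps_nonneg_Tfps fps_nonneg_deriv_Tfps g
        fps_ennval_compose[OF C' fps_nonneg_Tfps[OF g] Tfps_nth_0] fps_ennval_Tfps
        fps_ennval_deriv_Tfps)
  finally have chain: "ennreal (dMval z) = fps_ennval (fps_deriv (Cfps g)) (ennreal w) * ennreal S" .
  have "fps_ennval (fps_deriv (Cfps g)) (ennreal w) = ennreal (dMval z / S)"
  proof (cases "fps_ennval (fps_deriv (Cfps g)) (ennreal w)" rule: ennreal_cases)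
    case (real r)
    then have "dMval z = r * S"
      using chain S nonneg by (simp add: ennreal_mult[symmetric])
    then show ?thesis
      using real S by simp
  next
    case top
    then show ?thesis
      using chain S by (simp add: ennreal_mult_top)
  qed
  then have "(\<lambda>n. fps_deriv (Cfps g) $ n * w ^ n) sums (dMval z / S)"
    using nonneg S z g by (intro fps_ennval_sums C') (auto simp: w_def Tval_def)
  then show ?thesis
    unfolding w_def S_def rect_cumulant_eq_Cfps by (simp add: mult_ac)
qed

end

end

end

lemma dominated_series_le:
  fixes f h :: "nat \<Rightarrow> real"
  assumes "\<And>n. 0 \<le> f n" and "\<And>n. f n \<le> h n" and "h sums s"
  shows "summable f" and "suminf f \<le> s"
proof -
  show "summable f"
    using assms by (intro summable_comparison_test'[OF sums_summable[OF assms(3)]]) auto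
  then show "suminf f \<le> s"
    using assms by (metis sums_summable sums_unique suminf_le)
qed

lemma weighted_deriv_series_le:
  fixes c :: "nat \<Rightarrow> real"
  assumes c: "\<And>n. 0 \<le> c n" and w: "0 \<le> w" "w \<le> w1"
    and deriv: "(\<lambda>n. real (Suc n) * c (Suc n) * w1 ^ n) sums q"
  shows "summable (\<lambda>n. real (Suc n) * (c (Suc n) * w ^ Suc n))"
    and "(\<Sum>n. real (Suc n) * (c (Suc n) * w ^ Suc n)) \<le> w1 * q"
proof -
  have "(\<lambda>n. real (Suc n) * (c (Suc n) * w1 ^ Suc n)) sums (w1 * q)"
    using sums_mult[OF deriv, of w1] by (simp add: mult_ac)
  moreover have "real (Suc n) * (c (Suc n) * w ^ Suc n) \<le> real (Suc n) * (c (Suc n) * w1 ^ Suc n)" for n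
    using c w by (intro mult_left_mono power_mono) auto
  ultimately show "summable (\<lambda>n. real (Suc n) * (c (Suc n) * w ^ Suc n))"
    and "(\<Sum>n. real (Suc n) * (c (Suc n) * w ^ Suc n)) \<le> w1 * q"
    using c w by (intro dominated_series_le; simp)+
qed

lemma weighted_deriv_minus_series_le:
  fixes c :: "nat \<Rightarrow> real"
  assumes c: "\<And>n. 0 \<le> c n" "c 0 = 0" and w: "0 \<le> w" "w \<le> w1"
    and series: "(\<lambda>n. c n * w1 ^ n) sums m"
    and deriv: "(\<lambda>n. real (Suc n) * c (Suc n) * w1 ^ n) sums q"
  shows "summable (\<lambda>n. real (Suc n) * (c (Suc (Suc n)) * w ^ Suc (Suc n)))"
    and "(\<Sum>n. real (Suc n) * (c (Suc (Suc n)) * w ^ Suc (Suc n))) \<le> w1 * q - m"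
    and "0 \<le> w1 * q - m"
proof -
  have "(\<lambda>n. real (Suc n) * (c (Suc n) * w1 ^ Suc n)) sums (w1 * q)"
    using sums_mult[OF deriv, of w1] by (simp add: mult_ac)
  moreover have "(\<lambda>n. c (Suc n) * w1 ^ Suc n) sums m"
    using series c(2) by (subst sums_Suc_iff) simp
  ultimately have "(\<lambda>n. real n * (c (Suc n) * w1 ^ Suc n)) sums (w1 * q - m)"
    by (rule sums_diff[THEN sums_cong[THEN iffD1, rotated]]) (simp add: algebra_simps)
  then have tail: "(\<lambda>n. real (Suc n) * (c (Suc (Suc n)) * w1 ^ Suc (Suc n))) sums (w1 * q - m)"
    by (subst sums_Suc_iff) simp
  have "real (Suc n) * (c (Suc (Suc n)) * w ^ Suc (Suc n))
      \<le> real (Suc n) * (c (Suc (Suc n)) * w1 ^ Suc (Suc n))" for n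
    using c w by (intro mult_left_mono power_mono) auto
  then show "summable (\<lambda>n. real (Suc n) * (c (Suc (Suc n)) * w ^ Suc (Suc n)))"
    and "(\<Sum>n. real (Suc n) * (c (Suc (Suc n)) * w ^ Suc (Suc n))) \<le> w1 * q - m"
    using c w tail by (intro dominated_series_le; simp)+
  show "0 \<le> w1 * q - m"
    using c w by (intro sums_le[OF _ sums_zero tail]) simp
qed

section \<open>The box of half-widths \<open>(aO, aS)\<close>\<close>

lemma box_half_widths_exist:
  fixes g c U A :: real
  assumes "0 < g" "0 \<le> c" "0 \<le> U" "0 \<le> A" "0 < 1 - A" "0 < 1 - g * A"
    and det: "0 < (1 - g * A) * (1 - A) - g * U\<^sup>2"
  shows "\<exists>aO aS. 0 < aO \<and> 0 < aS \<and>
    (c + aS) * U + g * (c + aO) * A \<le> aO \<and> g * (c + aO) * U + (c + aS) * A \<le> aS"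
proof -
  define d where "d = (1 - g * A) * (1 - A) - g * U\<^sup>2"
  text \<open>\<open>(pO, pS)\<close> is the adjugate of \<open>I - [[g A, U], [g U, A]]\<close> applied to \<open>(1, 1)\<close>, so
    \<open>I - [[g A, U], [g U, A]]\<close> maps it to \<open>d (1, 1)\<close>; the factor \<open>t\<close> absorbs the constant \<open>c\<close>.\<close>
  define pO where "pO = U + 1 - A"
  define pS where "pS = g * U + 1 - g * A"
  define t where "t = 1 + c * (U + g * A + g * U + A) / d"
  have d: "0 < d"
    using det by (simp add: d_def)
  have td: "t * d = d + c * (U + g * A + g * U + A)"
    unfolding t_def using d by (simp add: distrib_right)
  have "0 \<le> c * (U + g * A + g * U + A) / d"
    using assms d by simp
  then have t: "1 \<le> t"
    unfolding t_def by linarith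
  have "0 \<le> g * U"
    using assms by simp
  then have "0 < pO" "0 < pS"
    using assms unfolding pO_def pS_def by linarith+
  then have pos: "0 < t * pO" "0 < t * pS"
    using t by simp_all
  have "c * (U + g * A) \<le> c * (U + g * A + g * U + A)"
    "c * (g * U + A) \<le> c * (U + g * A + g * U + A)"
    using assms by (simp_all add: mult_left_mono)
  moreover have "(c + t * pS) * U + g * (c + t * pO) * A = c * (U + g * A) + t * pO - t * d"
    "g * (c + t * pO) * U + (c + t * pS) * A = c * (g * U + A) + t * pS - t * d"
    by (simp_all add: pO_def pS_def d_def algebra_simps power2_eq_square)
  ultimately show ?thesis
    using pos td d by (intro exI[of _ "t * pO"] exI[of _ "t * pS"]) auto
qed

lemma abs_nonneg_combination_le:
  fixes \<alpha> \<beta> X Y P Q :: real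
  assumes "0 \<le> \<alpha>" "0 \<le> \<beta>" "\<bar>X\<bar> \<le> P" "\<bar>Y\<bar> \<le> Q"
  shows "\<bar>\<alpha> * X + \<beta> * Y\<bar> \<le> \<alpha> * P + \<beta> * Q"
proof -
  have "\<bar>\<alpha> * X + \<beta> * Y\<bar> \<le> \<alpha> * \<bar>X\<bar> + \<beta> * \<bar>Y\<bar>"
    using abs_triangle_ineq[of "\<alpha> * X" "\<beta> * Y"] assms by (simp add: abs_mult)
  also have "\<dots> \<le> \<alpha> * P + \<beta> * Q"
    using assms by (intro add_mono mult_left_mono)
  finally show ?thesis .
qed

lemma antidiagonal_two_weights_bound:
  fixes f :: "nat \<times> nat \<Rightarrow> real" and h1 h2 :: "nat \<Rightarrow> real"
  assumes f: "\<And>j k. \<bar>f (j, k)\<bar> \<le> B1 * h1 (j + k) + B2 * h2 (j + k)"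
    and B: "0 \<le> B1" "0 \<le> B2"
    and h1: "summable (\<lambda>n. real (Suc n) * h1 n)" "(\<Sum>n. real (Suc n) * h1 n) \<le> U1"
    and h2: "summable (\<lambda>n. real (Suc n) * h2 n)" "(\<Sum>n. real (Suc n) * h2 n) \<le> U2"
  shows "f summable_on UNIV" and "\<bar>infsum f UNIV\<bar> \<le> B1 * U1 + B2 * U2"
proof -
  define h where "h n = B1 * h1 n + B2 * h2 n" for n
  have eq: "(\<lambda>n. real (Suc n) * h n)
      = (\<lambda>n. B1 * (real (Suc n) * h1 n) + B2 * (real (Suc n) * h2 n))"
    by (auto simp: h_def algebra_simps)
  have summable: "summable (\<lambda>n. real (Suc n) * h n)"
    unfolding eq using h1 h2 by (intro summable_add summable_mult)
  show "f summable_on UNIV"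
    using f by (intro antidiagonal_summable_bound(1)[OF _ summable]) (simp add: h_def)
  have "\<bar>infsum f UNIV\<bar> \<le> (\<Sum>n. real (Suc n) * h n)"
    using f by (intro antidiagonal_summable_bound(2)[OF _ summable]) (simp add: h_def)
  also have "\<dots> = B1 * (\<Sum>n. real (Suc n) * h1 n) + B2 * (\<Sum>n. real (Suc n) * h2 n)"
    unfolding eq using h1 h2 by (simp add: suminf_add[symmetric] suminf_mult summable_mult)
  also have "\<dots> \<le> B1 * U1 + B2 * U2"
    using B h1 h2 by (intro add_mono mult_left_mono)
  finally show "\<bar>infsum f UNIV\<bar> \<le> B1 * U1 + B2 * U2" .
qed

lemma hOmega_term_eq:
  fixes mu :: "real measure" and g a b :: real
  assumes "g \<noteq> 0"
  defines "\<kappa> \<equiv> rect_cumulant mu g" and "w \<equiv> g / a\<^sup>2" and "D \<equiv> a\<^sup>2 * Delta_PCA mu g b a"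
  shows "hOmega_term mu g a b x y s t (j, k) =
    (\<kappa> (Suc (j + k)) * w ^ Suc (j + k)) / g * (D + x (s - int j) (t - int k))
    + (\<kappa> (Suc (Suc (j + k))) * w ^ Suc (Suc (j + k))) * (D + y (s - int j) (t - int k))"
proof -
  have "w / g = 1 / a\<^sup>2"
    using assms(1) by (simp add: w_def)
  then have r1: "\<kappa> (Suc (j + k)) * w ^ Suc (j + k) / g = \<kappa> (Suc (j + k)) * (1 / a\<^sup>2) * w ^ (j + k)"
    by (metis power_Suc2 times_divide_eq_right mult.commute mult.left_commute)
  have r2: "\<kappa> (Suc (Suc (j + k))) * w ^ Suc (Suc (j + k))
      = \<kappa> (Suc (Suc (j + k))) * w\<^sup>2 * w ^ (j + k)"
    by (simp add: power2_eq_square)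
  show ?thesis
    unfolding hOmega_term_def \<kappa>_def[symmetric] w_def[symmetric] D_def[symmetric] r1 r2
    by (simp add: algebra_simps)
qed

lemma hSigma_term_eq:
  fixes mu :: "real measure" and g a b :: real
  defines "\<kappa> \<equiv> rect_cumulant mu g" and "w \<equiv> g / a\<^sup>2" and "D \<equiv> a\<^sup>2 * Delta_PCA mu g b a"
  shows "hSigma_term mu g a b x y s t (j, k) =
    g * (\<kappa> (Suc (j + k)) * w ^ Suc (j + k)) * (D + y (s - int j) (t - int k))
    + (\<kappa> (Suc (Suc (j + k))) * w ^ Suc (Suc (j + k))) * (D + x (s - int j) (t - int k))"
proof -
  have r1: "g * (\<kappa> (Suc (j + k)) * w ^ Suc (j + k)) = \<kappa> (Suc (j + k)) * (g / a)\<^sup>2 * w ^ (j + k)"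
    by (simp add: w_def power2_eq_square power_divide)
  have r2: "\<kappa> (Suc (Suc (j + k))) * w ^ Suc (Suc (j + k))
      = \<kappa> (Suc (Suc (j + k))) * w\<^sup>2 * w ^ (j + k)"
    by (simp add: power2_eq_square)
  show ?thesis
    unfolding hSigma_term_def \<kappa>_def[symmetric] w_def[symmetric] D_def[symmetric] r1 r2
    by (simp add: algebra_simps)
qed

lemma inX_shift_abs_le:
  assumes "inX {-r..r} x"
  shows "\<forall>s\<le>0. \<forall>t\<le>0. \<bar>d + x s t\<bar> \<le> \<bar>d\<bar> + r"
proof (intro allI impI)
  fix s t :: int
  assume "s \<le> 0" "t \<le> 0"
  then have "x s t \<in> {-r..r}"
    using assms unfolding inX_def by blast
  then have "\<bar>x s t\<bar> \<le> r"
    by (simp add: abs_le_iff)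
  then show "\<bar>d + x s t\<bar> \<le> \<bar>d\<bar> + r"
    using abs_triangle_ineq[of d "x s t"] by linarith
qed

lemma hOmega_bound:
  fixes mu :: "real measure" and g a b U A Bx By :: real
  defines "\<kappa> \<equiv> rect_cumulant mu g" and "w \<equiv> g / a\<^sup>2" and "D \<equiv> a\<^sup>2 * Delta_PCA mu g b a"
  assumes g: "0 < g" and \<kappa>: "\<And>n. 0 \<le> \<kappa> n"
    and U: "summable (\<lambda>n. real (Suc n) * (\<kappa> (Suc n) * w ^ Suc n))"
      "(\<Sum>n. real (Suc n) * (\<kappa> (Suc n) * w ^ Suc n)) \<le> U"
    and A: "summable (\<lambda>n. real (Suc n) * (\<kappa> (Suc (Suc n)) * w ^ Suc (Suc n)))"
      "(\<Sum>n. real (Suc n) * (\<kappa> (Suc (Suc n)) * w ^ Suc (Suc n))) \<le> A"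
    and x: "\<forall>s\<le>0. \<forall>t\<le>0. \<bar>D + x s t\<bar> \<le> Bx"
    and y: "\<forall>s\<le>0. \<forall>t\<le>0. \<bar>D + y s t\<bar> \<le> By"
    and st: "s \<le> 0" "t \<le> 0"
  shows "hOmega_term mu g a b x y s t summable_on UNIV"
    and "\<bar>hOmega mu g a b x y s t\<bar> \<le> Bx * U + g * By * A"
proof -
  have "0 \<le> Bx" "0 \<le> By"
    using order_trans[OF abs_ge_zero x[rule_format, of 0 0]]
      order_trans[OF abs_ge_zero y[rule_format, of 0 0]] by simp_all
  have weights: "0 \<le> \<kappa> (Suc n) * w ^ Suc n" "0 \<le> \<kappa> (Suc (Suc n)) * w ^ Suc (Suc n)" for n
    using \<kappa> g by (simp_all add: w_def)
  have "\<bar>hOmega_term mu g a b x y s t (j, k)\<bar>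
      \<le> (\<kappa> (Suc (j + k)) * w ^ Suc (j + k)) / g * Bx
        + (\<kappa> (Suc (Suc (j + k))) * w ^ Suc (Suc (j + k))) * By" for j k
    unfolding hOmega_term_eq[OF less_imp_neq[OF g, symmetric]] \<kappa>_def[symmetric] w_def[symmetric]
      D_def[symmetric]
    using weights g st by (intro abs_nonneg_combination_le x[rule_format] y[rule_format]) auto
  then have "\<bar>hOmega_term mu g a b x y s t (j, k)\<bar>
      \<le> Bx / g * (\<kappa> (Suc (j + k)) * w ^ Suc (j + k))
        + By * (\<kappa> (Suc (Suc (j + k))) * w ^ Suc (Suc (j + k)))" for j k
    by (simp add: field_simps)
  note bound = antidiagonal_two_weights_bound[OF this _ _ U A]
  then show "hOmega_term mu g a b x y s t summable_on UNIV"
    using \<open>0 \<le> Bx\<close> \<open>0 \<le> By\<close> g by simp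
  have "\<bar>hOmega mu g a b x y s t\<bar> = g * \<bar>infsum (hOmega_term mu g a b x y s t) UNIV\<bar>"
    unfolding hOmega_def using g by (simp add: abs_mult)
  also have "\<dots> \<le> g * (Bx / g * U + By * A)"
    using bound(2) \<open>0 \<le> Bx\<close> \<open>0 \<le> By\<close> g by (intro mult_left_mono) auto
  also have "\<dots> = Bx * U + g * By * A"
    using g by (simp add: field_simps)
  finally show "\<bar>hOmega mu g a b x y s t\<bar> \<le> Bx * U + g * By * A" .
qed

lemma hSigma_bound:
  fixes mu :: "real measure" and g a b U A Bx By :: real
  defines "\<kappa> \<equiv> rect_cumulant mu g" and "w \<equiv> g / a\<^sup>2" and "D \<equiv> a\<^sup>2 * Delta_PCA mu g b a"
  assumes g: "0 < g" and \<kappa>: "\<And>n. 0 \<le> \<kappa> n"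
    and U: "summable (\<lambda>n. real (Suc n) * (\<kappa> (Suc n) * w ^ Suc n))"
      "(\<Sum>n. real (Suc n) * (\<kappa> (Suc n) * w ^ Suc n)) \<le> U"
    and A: "summable (\<lambda>n. real (Suc n) * (\<kappa> (Suc (Suc n)) * w ^ Suc (Suc n)))"
      "(\<Sum>n. real (Suc n) * (\<kappa> (Suc (Suc n)) * w ^ Suc (Suc n))) \<le> A"
    and x: "\<forall>s\<le>0. \<forall>t\<le>0. \<bar>D + x s t\<bar> \<le> Bx"
    and y: "\<forall>s\<le>0. \<forall>t\<le>0. \<bar>D + y s t\<bar> \<le> By"
    and st: "s \<le> 0" "t \<le> 0"
  shows "hSigma_term mu g a b x y s t summable_on UNIV"
    and "\<bar>hSigma mu g a b x y s t\<bar> \<le> g * By * U + Bx * A"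
proof -
  have "0 \<le> Bx" "0 \<le> By"
    using order_trans[OF abs_ge_zero x[rule_format, of 0 0]]
      order_trans[OF abs_ge_zero y[rule_format, of 0 0]] by simp_all
  have weights: "0 \<le> \<kappa> (Suc n) * w ^ Suc n" "0 \<le> \<kappa> (Suc (Suc n)) * w ^ Suc (Suc n)" for n
    using \<kappa> g by (simp_all add: w_def)
  have "\<bar>hSigma_term mu g a b x y s t (j, k)\<bar>
      \<le> g * (\<kappa> (Suc (j + k)) * w ^ Suc (j + k)) * By
        + (\<kappa> (Suc (Suc (j + k))) * w ^ Suc (Suc (j + k))) * Bx" for j k
    unfolding hSigma_term_eq \<kappa>_def[symmetric] w_def[symmetric] D_def[symmetric]
    using weights g st by (intro abs_nonneg_combination_le x[rule_format] y[rule_format]) auto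
  then have "\<bar>hSigma_term mu g a b x y s t (j, k)\<bar>
      \<le> g * By * (\<kappa> (Suc (j + k)) * w ^ Suc (j + k))
        + Bx * (\<kappa> (Suc (Suc (j + k))) * w ^ Suc (Suc (j + k)))" for j k
    by (simp add: mult_ac)
  note bound = antidiagonal_two_weights_bound[OF this _ _ U A]
  then show "hSigma_term mu g a b x y s t summable_on UNIV"
    using \<open>0 \<le> Bx\<close> \<open>0 \<le> By\<close> g by simp
  show "\<bar>hSigma mu g a b x y s t\<bar> \<le> g * By * U + Bx * A"
    unfolding hSigma_def using bound(2) \<open>0 \<le> Bx\<close> \<open>0 \<le> By\<close> g by simp
qed

lemma hOmega_hSigma_preserve_box:
  fixes mu :: "real measure" and g a b aO aS U A :: real
  defines "\<kappa> \<equiv> rect_cumulant mu g" and "w \<equiv> g / a\<^sup>2" and "c \<equiv> \<bar>a\<^sup>2 * Delta_PCA mu g b a\<bar>"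
  assumes g: "0 < g" and \<kappa>: "\<And>n. 0 \<le> \<kappa> n"
    and U: "summable (\<lambda>n. real (Suc n) * (\<kappa> (Suc n) * w ^ Suc n))"
      "(\<Sum>n. real (Suc n) * (\<kappa> (Suc n) * w ^ Suc n)) \<le> U"
    and A: "summable (\<lambda>n. real (Suc n) * (\<kappa> (Suc (Suc n)) * w ^ Suc (Suc n)))"
      "(\<Sum>n. real (Suc n) * (\<kappa> (Suc (Suc n)) * w ^ Suc (Suc n))) \<le> A"
    and Omega: "(c + aS) * U + g * (c + aO) * A \<le> aO"
    and Sigma: "g * (c + aO) * U + (c + aS) * A \<le> aS"
    and x: "inX {-aS..aS} x" and y: "inX {-aO..aO} y"
  shows "(\<forall>s\<le>0. \<forall>t\<le>0. hOmega_term mu g a b x y s t summable_on UNIV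
                     \<and> hSigma_term mu g a b x y s t summable_on UNIV) \<and>
    inX {-aO..aO} (hOmega mu g a b x y) \<and> inX {-aS..aS} (hSigma mu g a b x y)"
proof -
  have x_bound: "\<forall>s\<le>0. \<forall>t\<le>0. \<bar>a\<^sup>2 * Delta_PCA mu g b a + x s t\<bar> \<le> c + aS"
    using inX_shift_abs_le[OF x] unfolding c_def .
  have y_bound: "\<forall>s\<le>0. \<forall>t\<le>0. \<bar>a\<^sup>2 * Delta_PCA mu g b a + y s t\<bar> \<le> c + aO"
    using inX_shift_abs_le[OF y] unfolding c_def .
  note Omega_bound = hOmega_bound[OF g \<kappa>[unfolded \<kappa>_def] U[unfolded \<kappa>_def w_def]
      A[unfolded \<kappa>_def w_def] x_bound y_bound]
  note Sigma_bound = hSigma_bound[OF g \<kappa>[unfolded \<kappa>_def] U[unfolded \<kappa>_def w_def]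
      A[unfolded \<kappa>_def w_def] x_bound y_bound]
  show ?thesis
    unfolding inX_def
  proof (intro conjI allI impI)
    fix s t :: int
    assume st: "s \<le> 0" "t \<le> 0"
    show "hOmega_term mu g a b x y s t summable_on UNIV" "hSigma_term mu g a b x y s t summable_on UNIV"
      using Omega_bound(1)[OF st] Sigma_bound(1)[OF st] .
    show "hOmega mu g a b x y s t \<in> {-aO..aO}"
      using Omega_bound(2)[OF st] Omega by (simp add: abs_le_iff)
    show "hSigma mu g a b x y s t \<in> {-aS..aS}"
      using Sigma_bound(2)[OF st] Sigma by (simp add: abs_le_iff)
  qed
qed

theorem mainTheorem9:
  fixes mu :: "real measure" and g a b :: real
  assumes "prob_space mu" and "sets mu = sets borel"
    and "0 < g" and "g \<le> 1" and "0 < a"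
    and "AE x in mu. 0 \<le> x \<and> x \<le> b"
    and "\<forall>e>0. 0 < measure mu {b - e<..}"
    and "\<forall>i\<ge>1. 0 \<le> rect_cumulant mu g i"
    and "a / sqrt g > alpha_s mu g b"
  shows "\<exists>aO aS. 0 < aO \<and> 0 < aS \<and>
    (\<forall>x y. inX {-aS..aS} x \<and> inX {-aO..aO} y \<longrightarrow>
       (\<forall>s\<le>0. \<forall>t\<le>0. hOmega_term mu g a b x y s t summable_on UNIV
                     \<and> hSigma_term mu g a b x y s t summable_on UNIV) \<and>
       inX {-aO..aO} (hOmega mu g a b x y) \<and> inX {-aS..aS} (hSigma mu g a b x y))"
proof -
  interpret bounded_nonneg_law mu b
    using assms(1,2,6) by (simp add: bounded_nonneg_law_def bounded_nonneg_law_axioms_def)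
  have g: "0 \<le> g" and \<kappa>: "\<And>n. 0 \<le> rect_cumulant mu g n"
    using assms(3) rect_cumulant_nonneg[OF assms(8)] by simp_all
  obtain z where "0 < z" "b\<^sup>2 * z < 1" "g / a\<^sup>2 \<le> Tval g (Mval z) z"
    using exists_small_T_ge[OF assms(3,5,9)] by blast
  then have z: "0 \<le> z" "b\<^sup>2 * z < 1" and w: "0 \<le> g / a\<^sup>2" "g / a\<^sup>2 \<le> Tval g (Mval z) z"
    using g by simp_all
  define U where "U = Tval g (Mval z) z * (dMval z / dTval g (Mval z) (dMval z) z)"
  note conditions = contraction_conditions[OF g Mval_nonneg[OF z] dMval_nonneg[OF z] z(1), folded U_def]
  note U_bounds = weighted_deriv_series_le[OF \<kappa> w cumulant_deriv_series_sums[OF g z assms(8)], folded U_def]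
  note A_bounds = weighted_deriv_minus_series_le[OF \<kappa> rect_cumulant_0 w cumulant_series_sums[OF g z assms(8)]
      cumulant_deriv_series_sums[OF g z assms(8)], folded U_def]
  obtain aO aS where box: "0 < aO" "0 < aS"
    "(\<bar>a\<^sup>2 * Delta_PCA mu g b a\<bar> + aS) * U + g * (\<bar>a\<^sup>2 * Delta_PCA mu g b a\<bar> + aO) * (U - Mval z) \<le> aO"
    "g * (\<bar>a\<^sup>2 * Delta_PCA mu g b a\<bar> + aO) * U + (\<bar>a\<^sup>2 * Delta_PCA mu g b a\<bar> + aS) * (U - Mval z) \<le> aS"
    using box_half_widths_exist[OF assms(3) abs_ge_zero conditions(1) A_bounds(3) conditions(2-4)]
    by blast
  show ?thesis
    using hOmega_hSigma_preserve_box[OF assms(3) \<kappa> U_bounds A_bounds(1,2) box(3,4)] box(1,2) by blast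
qed

end
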